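(* Let $K_1,K_2$ be knots in $S^3$. If $r\in js(K_1\sharp K_2)$, then there exist $r_1\in js(K_1)$ and $r_2\in js(K_2)$ with $r=r_1+r_2$.
   Context: The colored Jones function of $K$ is the sequence $J_{K,n}(q)\in\mathbb{Z}[q^{\pm1}]$, $n\in\mathbb{N}$ (normalized so that the unknot has $J_n=1$ and $J_{K,2}$ is the Jones polynomial); it satisfies $J_{K_1\sharp K_2,n}=J_{K_1,n}J_{K_2,n}$. $\delta_K(n)$ is the maximum $q$-degree of $J_{K,n}(q)$; it is a quadratic quasi-polynomial $c_2(n)n^2+c_1(n)n+c_0(n)$ with rational-valued periodic functions $c_i$ of integral period. $js(K)$ is the set of cluster points (limits of subsequences) of $\{4\delta_K(n)/n^2\}_{n\in\mathbb{N}}$, which equals the finite set of values of $4c_2(n)$. *)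

theory Defs
  imports "HOL-Analysis.Analysis" "HOL-Computational_Algebra.Formal_Laurent_Series"
begin

text \<open>Laurent polynomials in Z[q^{+-1}] are modelled as integer formal Laurent series
  with finitely many nonzero coefficients.\<close>

definition laurent_poly :: "int fls \<Rightarrow> bool" where
  "laurent_poly f \<longleftrightarrow> finite {d. fls_nth f d \<noteq> 0}"

definition max_qdeg :: "int fls \<Rightarrow> int" where
  "max_qdeg f = Max {d. fls_nth f d \<noteq> 0}"

text \<open>Colored Jones function J (indexed by n >= 1) and its degree function delta_K(n).\<close>
definition jdelta :: "(nat \<Rightarrow> int fls) \<Rightarrow> nat \<Rightarrow> int" where
  "jdelta J n = max_qdeg (J n)"

definition quadratic_quasi_poly :: "(nat \<Rightarrow> int) \<Rightarrow> bool" where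
  "quadratic_quasi_poly \<delta> \<longleftrightarrow>
     (\<exists>c2 c1 c0 :: nat \<Rightarrow> real. \<exists>p::nat. p > 0 \<and>
        (\<forall>n. c2 (n + p) = c2 n \<and> c1 (n + p) = c1 n \<and> c0 (n + p) = c0 n) \<and>
        (\<forall>n. c2 n \<in> \<rat> \<and> c1 n \<in> \<rat> \<and> c0 n \<in> \<rat>) \<and>
        (\<forall>n\<ge>1. real_of_int (\<delta> n) = c2 n * (real n)^2 + c1 n * real n + c0 n))"

definition js :: "(nat \<Rightarrow> int fls) \<Rightarrow> real set" where
  "js J = {r. \<exists>s::nat \<Rightarrow> nat. strict_mono s \<and>
             (\<lambda>k. 4 * real_of_int (jdelta J (s k)) / (real (s k))^2) \<longlonglongrightarrow> r}"

end

theory Submission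
  imports Defs
begin

text \<open>The top coefficient of a product of Laurent polynomials over \<int> is the product of
  the top coefficients, so the degree function of the connected sum is the sum of the two
  degree functions. A quadratic quasi-polynomial is \<open>O(n\<^sup>2)\<close>, so the ratios
  \<open>4 \<delta>(n) / n\<^sup>2\<close> of the first knot are bounded. Along a subsequence on which the ratios of
  the connected sum tend to \<open>r\<close>, Bolzano-Weierstrass therefore yields a further subsequence
  on which the ratios of the first knot tend to some \<open>r\<^sub>1\<close>; those of the second knot then
  tend to \<open>r - r\<^sub>1\<close>.\<close>

lemma fls_times_nth_interval:
  fixes f g :: "'a::semiring_0 fls"
  assumes "a \<le> fls_subdegree f" "n - fls_subdegree g \<le> b"
  shows "fls_nth (f * g) n = (\<Sum>i=a..b. fls_nth f i * fls_nth g (n - i))"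
proof -
  have "fls_nth (f * g) n
      = (\<Sum>i=fls_subdegree f..n - fls_subdegree g. fls_nth f i * fls_nth g (n - i))"
    by (rule fls_times_nth(2))
  also have "\<dots> = (\<Sum>i=a..b. fls_nth f i * fls_nth g (n - i))"
    using assms by (intro sum.mono_neutral_left) (auto simp: not_le)
  finally show ?thesis .
qed

lemma fls_times_nth_top:
  fixes f g :: "'a::semiring_0 fls"
  assumes f: "\<And>i. i > M \<Longrightarrow> fls_nth f i = 0" and g: "\<And>j. j > N \<Longrightarrow> fls_nth g j = 0"
    and "M + N \<le> n"
  shows "fls_nth (f * g) n = (if n = M + N then fls_nth f M * fls_nth g N else 0)"
proof -
  let ?I = "{min (fls_subdegree f) M..max (n - fls_subdegree g) M}"
  let ?top = "if n = M + N then fls_nth f M * fls_nth g N else 0"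
  have "fls_nth (f * g) n = (\<Sum>i\<in>?I. fls_nth f i * fls_nth g (n - i))"
    by (rule fls_times_nth_interval) auto
  also have "\<dots> = (\<Sum>i\<in>?I. if i = M then ?top else 0)"
  proof (rule sum.cong)
    fix i
    show "fls_nth f i * fls_nth g (n - i) = (if i = M then ?top else 0)"
      using f[of i] g[of "n - i"] assms(3) by (cases i M rule: linorder_cases) auto
  qed simp
  also have "\<dots> = ?top"
    by simp
  finally show ?thesis .
qed

lemma nth_above_max_qdeg:
  assumes "laurent_poly f" "max_qdeg f < d"
  shows "fls_nth f d = 0"
proof (rule ccontr)
  assume "fls_nth f d \<noteq> 0"
  then have "d \<le> max_qdeg f"
    using assms(1) unfolding laurent_poly_def max_qdeg_def by (intro Max_ge) auto
  with assms(2) show False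
    by simp
qed

lemma nth_max_qdeg_nonzero:
  assumes "laurent_poly f" "f \<noteq> 0"
  shows "fls_nth f (max_qdeg f) \<noteq> 0"
proof -
  have "{d. fls_nth f d \<noteq> 0} \<noteq> {}"
    using assms(2) by (auto simp: fls_eq_iff)
  then show ?thesis
    using assms(1) Max_in[of "{d. fls_nth f d \<noteq> 0}"] by (simp add: laurent_poly_def max_qdeg_def)
qed

lemma max_qdeg_eqI:
  assumes "laurent_poly f" "fls_nth f d \<noteq> 0" "\<And>e. e > d \<Longrightarrow> fls_nth f e = 0"
  shows "max_qdeg f = d"
  unfolding max_qdeg_def
  using assms by (intro Max_eqI) (auto simp: laurent_poly_def not_less[symmetric])

lemma nth_mult_above_max_qdeg:
  assumes "laurent_poly f" "laurent_poly g" "max_qdeg f + max_qdeg g < d"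
  shows "fls_nth (f * g) d = 0"
  using fls_times_nth_top[of "max_qdeg f" f "max_qdeg g" g d] assms
    nth_above_max_qdeg[OF assms(1)] nth_above_max_qdeg[OF assms(2)]
  by simp

lemma laurent_poly_mult:
  assumes "laurent_poly f" "laurent_poly g"
  shows "laurent_poly (f * g)"
proof -
  have "{d. fls_nth (f * g) d \<noteq> 0}
      \<subseteq> {fls_subdegree f + fls_subdegree g..max_qdeg f + max_qdeg g}"
    using fls_times_nth_eq0[of _ f g] nth_mult_above_max_qdeg[OF assms]
    by (auto simp: not_less[symmetric])
  then show ?thesis
    unfolding laurent_poly_def by (rule finite_subset) simp
qed

lemma max_qdeg_mult:
  assumes f: "laurent_poly f" "f \<noteq> 0" and g: "laurent_poly g" "g \<noteq> 0"
  shows "max_qdeg (f * g) = max_qdeg f + max_qdeg g"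
proof (rule max_qdeg_eqI)
  show "laurent_poly (f * g)"
    using f(1) g(1) by (rule laurent_poly_mult)
  show "fls_nth (f * g) (max_qdeg f + max_qdeg g) \<noteq> 0"
    using fls_times_nth_top[of "max_qdeg f" f "max_qdeg g" g] nth_above_max_qdeg[OF f(1)]
      nth_above_max_qdeg[OF g(1)] nth_max_qdeg_nonzero[OF f] nth_max_qdeg_nonzero[OF g]
    by simp
  show "fls_nth (f * g) e = 0" if "e > max_qdeg f + max_qdeg g" for e
    using f(1) g(1) that by (rule nth_mult_above_max_qdeg)
qed

lemma periodic_range_eq:
  fixes p :: nat
  assumes "p > 0" and "\<And>n. f (n + p) = f n"
  shows "range f = f ` {..<p}"
proof -
  have shift: "f (m + k * p) = f m" for m k
  proof (induction k)
    case (Suc k)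
    have "m + Suc k * p = (m + k * p) + p"
      by simp
    then show ?case
      using Suc assms(2) by metis
  qed simp
  have "f n = f (n mod p)" for n
    using shift[of "n mod p" "n div p"] by simp
  then show ?thesis
    using assms(1)
    by (metis image_eqI image_subsetI lessThan_iff mod_less_divisor rangeI subset_antisym)
qed

lemma quadratic_quasi_poly_bounded:
  assumes "quadratic_quasi_poly \<delta>"
  shows "bounded (range (\<lambda>n. real_of_int (\<delta> n) / (real n)^2))"
proof -
  obtain c2 c1 c0 :: "nat \<Rightarrow> real" and p :: nat where "p > 0"
    and per: "\<And>n. c2 (n + p) = c2 n \<and> c1 (n + p) = c1 n \<and> c0 (n + p) = c0 n"
    and eq: "\<And>n. n \<ge> 1 \<Longrightarrow> real_of_int (\<delta> n) = c2 n * (real n)^2 + c1 n * real n + c0 n"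
    using assms unfolding quadratic_quasi_poly_def by blast
  define C where "C n = \<bar>c2 n\<bar> + \<bar>c1 n\<bar> + \<bar>c0 n\<bar>" for n
  have "finite (range C)"
    using periodic_range_eq[OF \<open>p > 0\<close>, of C] per by (simp add: C_def)
  then have C_le: "C n \<le> Max (range C)" for n
    by simp
  have ratio_le: "\<bar>real_of_int (\<delta> n) / (real n)^2\<bar> \<le> C n" if "n \<ge> 1" for n
  proof -
    have n: "real n \<ge> 1"
      using that by simp
    have "real_of_int (\<delta> n) / (real n)^2 = c2 n + c1 n / real n + c0 n / (real n)^2"
      using eq[OF that] n by (simp add: field_simps power2_eq_square)
    also have "\<bar>\<dots>\<bar> \<le> \<bar>c2 n\<bar> + \<bar>c1 n / real n\<bar> + \<bar>c0 n / (real n)^2\<bar>"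
      by linarith
    also have "\<dots> \<le> C n"
    proof -
      have "\<bar>c1 n / real n\<bar> \<le> \<bar>c1 n\<bar>"
        using frac_le[of "\<bar>c1 n\<bar>" "\<bar>c1 n\<bar>" 1 "real n"] n by simp
      moreover have "\<bar>c0 n / (real n)^2\<bar> \<le> \<bar>c0 n\<bar>"
        using frac_le[of "\<bar>c0 n\<bar>" "\<bar>c0 n\<bar>" 1 "(real n)^2"] n by simp
      ultimately show ?thesis unfolding C_def by linarith
    qed
    finally show ?thesis .
  qed
  then have "norm (real_of_int (\<delta> n) / (real n)^2) \<le> Max (range C)" for n
  proof (cases "n = 0")
    case True
    have "0 \<le> C 0"
      by (simp add: C_def)
    then show ?thesis
      using True C_le[of 0] by simp
  next
    case False
    then show ?thesis
      using ratio_le[of n] C_le[of n] by simp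
  qed
  then show ?thesis
    unfolding bounded_iff by blast
qed

definition subseq_limits :: "(nat \<Rightarrow> 'a::topological_space) \<Rightarrow> 'a set" where
  "subseq_limits X = {l. \<exists>s. strict_mono s \<and> (X \<circ> s) \<longlonglongrightarrow> l}"

lemma subseq_limits_add_subset:
  fixes a b :: "nat \<Rightarrow> 'a::{heine_borel, real_normed_vector}"
  assumes "bounded (range a)"
  shows "subseq_limits (\<lambda>n. a n + b n) \<subseteq> {x + y |x y. x \<in> subseq_limits a \<and> y \<in> subseq_limits b}"
proof
  fix l assume "l \<in> subseq_limits (\<lambda>n. a n + b n)"
  then obtain s where s: "strict_mono s" and ab: "(\<lambda>k. a (s k) + b (s k)) \<longlonglongrightarrow> l"
    by (auto simp: subseq_limits_def o_def)
  have "bounded (range (a \<circ> s))"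
    using assms by (rule bounded_subset) auto
  then obtain t x where t: "strict_mono t" and a: "(a \<circ> s \<circ> t) \<longlonglongrightarrow> x"
    using bounded_imp_convergent_subsequence by blast
  have "((\<lambda>k. a (s k) + b (s k)) \<circ> t) \<longlonglongrightarrow> l"
    using ab t by (rule LIMSEQ_subseq_LIMSEQ)
  from tendsto_diff[OF this a] have b: "(b \<circ> s \<circ> t) \<longlonglongrightarrow> l - x"
    by (simp add: o_def)
  have "strict_mono (s \<circ> t)"
    using s t by (rule strict_mono_o)
  then have "x \<in> subseq_limits a" "l - x \<in> subseq_limits b"
    using a b by (auto simp: subseq_limits_def o_assoc)
  then show "l \<in> {x + y |x y. x \<in> subseq_limits a \<and> y \<in> subseq_limits b}"
    by force
qed

definition degree_ratio :: "(nat \<Rightarrow> int fls) \<Rightarrow> nat \<Rightarrow> real" where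
  "degree_ratio J n = 4 * real_of_int (jdelta J n) / (real n)^2"

lemma js_eq_subseq_limits: "js J = subseq_limits (degree_ratio J)"
  by (simp add: js_def subseq_limits_def degree_ratio_def o_def)

lemma bounded_degree_ratio:
  assumes "quadratic_quasi_poly (jdelta J)"
  shows "bounded (range (degree_ratio J))"
proof -
  have "range (degree_ratio J)
      = (\<lambda>x. 4 *\<^sub>R x) ` range (\<lambda>n. real_of_int (jdelta J n) / (real n)^2)"
    unfolding degree_ratio_def image_image by simp
  then show ?thesis
    using bounded_scaling[OF quadratic_quasi_poly_bounded[OF assms]] by simp
qed

theorem lemma2p1:
  fixes J1 J2 J12 :: "nat \<Rightarrow> int fls" and r :: real
  assumes lp1: "\<And>n. n \<ge> 1 \<Longrightarrow> laurent_poly (J1 n) \<and> J1 n \<noteq> 0"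
    and lp2: "\<And>n. n \<ge> 1 \<Longrightarrow> laurent_poly (J2 n) \<and> J2 n \<noteq> 0"
    and qp1: "quadratic_quasi_poly (jdelta J1)"
    and qp2: "quadratic_quasi_poly (jdelta J2)"
    and connsum: "\<And>n. n \<ge> 1 \<Longrightarrow> J12 n = J1 n * J2 n"
    and r: "r \<in> js J12"
  shows "\<exists>r1 \<in> js J1. \<exists>r2 \<in> js J2. r = r1 + r2"
proof -
  \<comment> \<open>At \<open>n = 0\<close> all three ratios are \<open>0\<close> (division by zero), whatever \<open>J12 0\<close> is.\<close>
  have "degree_ratio J12 = (\<lambda>n. degree_ratio J1 n + degree_ratio J2 n)"
  proof
    fix n
    show "degree_ratio J12 n = degree_ratio J1 n + degree_ratio J2 n"
    proof (cases "n = 0")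
      case False
      then have "jdelta J12 n = jdelta J1 n + jdelta J2 n"
        using connsum[of n] lp1[of n] lp2[of n] by (simp add: jdelta_def max_qdeg_mult)
      then show ?thesis
        by (simp add: degree_ratio_def add_divide_distrib distrib_left)
    qed (simp add: degree_ratio_def)
  qed
  \<comment> \<open>Only the \<open>K\<^sub>1\<close>-term has to be bounded.\<close>
  with r subseq_limits_add_subset[OF bounded_degree_ratio[OF qp1]] show ?thesis
    by (force simp: js_eq_subseq_limits)
qed

end
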